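(* Let $u$ be a smooth solution on $[0,1]\times[0,T]$ of $$u_t=\frac{u_{xx}}{1+u_x^2}+g(x,u)\sqrt{1+u_x^2}$$ satisfying $u(0,t)-u(0,0)=u(1,t)-u(1,0)$ and $u_x(0,t)=u_x(1,t)$ for all $t\in[0,T]$, and let $F(x):=\int_0^x\arctan(t)\,dt=x\arctan x-\log\sqrt{1+x^2}$. Then there is a constant $C>0$ depending only on $\|g\|_{L^\infty}$ such that for all $t\in[0,T]$ $$\partial_t\int_0^1\sqrt{1+u_x^2}\,dx\le C\int_0^1\sqrt{1+u_x^2}\,dx,$$ $$\partial_t\int_0^1F(u_x)\,dx\le C\int_0^1(1+u_x^2)\,dx,$$ $$\partial_t\int_0^1\big(1+u_x^2\big)^{3/2}dx\le C+C\Big(\int_0^1\big(1+u_x^2\big)^{3/2}dx\Big)^3.$$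
   Context: $g\in C^\infty(\mathbb{R}^2)$ is bounded with all derivatives bounded, and 1-periodic in each variable. Subscripts denote partial derivatives. *)

theory Defs
  imports "HOL-Analysis.Analysis"
begin

definition partials_family ::
  "real set \<Rightarrow> real set \<Rightarrow> (real \<Rightarrow> real \<Rightarrow> real) \<Rightarrow> (nat \<Rightarrow> nat \<Rightarrow> real \<Rightarrow> real \<Rightarrow> real) \<Rightarrow> bool" where
  "partials_family A B f D \<longleftrightarrow>
     D 0 0 = f \<and>
     (\<forall>i j. continuous_on (A \<times> B) (\<lambda>z. D i j (fst z) (snd z))) \<and>
     (\<forall>i j. \<forall>x\<in>A. \<forall>y\<in>B.
        ((\<lambda>s. D i j s y) has_real_derivative D (Suc i) j x y) (at x within A) \<and>
        ((\<lambda>s. D i j x s) has_real_derivative D i (Suc j) x y) (at y within B))"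

definition smooth2_on :: "real set \<Rightarrow> real set \<Rightarrow> (real \<Rightarrow> real \<Rightarrow> real) \<Rightarrow> bool" where
  "smooth2_on A B f \<longleftrightarrow> (\<exists>D. partials_family A B f D)"

definition smooth2_bounded_derivs :: "(real \<Rightarrow> real \<Rightarrow> real) \<Rightarrow> bool" where
  "smooth2_bounded_derivs f \<longleftrightarrow>
     (\<exists>D. partials_family UNIV UNIV f D \<and> (\<forall>i j. \<exists>K. \<forall>x y. \<bar>D i j x y\<bar> \<le> K))"

text \<open>F(x) = \<integral>_0^x arctan t dt = x arctan x - log sqrt(1+x^2).\<close>
definition Fat :: "real \<Rightarrow> real" where
  "Fat x = x * arctan x - ln (sqrt (1 + x\<^sup>2))"

end

theory Submission
  imports Defs
begin

(* Write p = u_x, w = 1 + p^2.  For a smooth profile Phi, differentiating under the integral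
   sign and integrating by parts in x (the boundary terms cancel by periodicity) gives
       d/dt \<integral> Phi(p) = - \<integral> Phi''(p) u_xx u_t.
   The equation says |u_t - u_xx/w| <= M sqrt w, and a pointwise Young inequality bounds
   - k u_xx u_t for any weight k >= 0.  For Phi = sqrt w and Phi = F (so Phi'' = w^(-3/2) resp.
   1/w) this gives the first two estimates directly.  For Phi = w^(3/2) the Young inequality
   leaves a good term -(3/2) \<integral> u_xx^2/sqrt w and a bad term 3M^2 \<integral> w^(5/2); the
   latter is controlled by sup w times \<integral> w^(3/2), and sup w is bounded via the total
   variation of w, which is absorbed by the good term. *)

(* The pointwise Young inequalities for the drift term: with V = u_t, Q = u_xx and w = 1 + u_x^2,
   the equation gives |V - Q/w| <= M sqrt w, and then -k Q V is bounded for every weight k >= 0,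
   in the second form keeping a negative multiple of Q^2 to absorb error terms later. *)
lemma drift_term_bounds:
  fixes k w Q V M :: real
  assumes k: "k \<ge> 0" and w: "w > 0" and forcing: "\<bar>V - Q / w\<bar> \<le> M * sqrt w"
  shows drift_term_young: "- (k * Q * V) \<le> k * w\<^sup>2 * M\<^sup>2 / 4"
    and drift_term_absorb: "- (k * Q * V) \<le> - (k * Q\<^sup>2 / (2 * w)) + k * w\<^sup>2 * M\<^sup>2 / 2"
proof -
  define E where "E = V - Q / w"
  have V: "V = Q / w + E" unfolding E_def using w by simp
  have "E\<^sup>2 \<le> (M * sqrt w)\<^sup>2"
    using power_mono[OF forcing abs_ge_zero, of 2] unfolding E_def by simp
  then have E2: "k * w * E\<^sup>2 \<le> k * w * (M\<^sup>2 * w)"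
    using k w by (intro mult_left_mono) (auto simp: power_mult_distrib)
  have "0 \<le> k * (Q + w * E / 2)\<^sup>2 / w" using k w by simp
  also have "\<dots> = k * w * E\<^sup>2 / 4 + k * Q * V"
    using w by (simp add: V field_simps power2_eq_square)
  finally show "- (k * Q * V) \<le> k * w\<^sup>2 * M\<^sup>2 / 4"
    using E2 by (simp add: power2_eq_square algebra_simps)
  have "0 \<le> k * (Q + w * E)\<^sup>2 / (2 * w)" using k w by simp
  also have "\<dots> = - (k * Q\<^sup>2 / (2 * w)) + k * Q * V + k * w * E\<^sup>2 / 2"
    using w by (simp add: V field_simps power2_eq_square)
  finally show "- (k * Q * V) \<le> - (k * Q\<^sup>2 / (2 * w)) + k * w\<^sup>2 * M\<^sup>2 / 2"
    using E2 by (simp add: power2_eq_square algebra_simps)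
qed

lemma gradient_weight:
  fixes p :: real
  shows gradient_weight_pos: "0 < 1 + p\<^sup>2"
    and gradient_weight_sqrt_pos: "0 < sqrt (1 + p\<^sup>2)"
    and gradient_weight_sqrt_sq: "sqrt (1 + p\<^sup>2) * sqrt (1 + p\<^sup>2) = 1 + p\<^sup>2"
    and gradient_weight_abs_le: "\<bar>p\<bar> \<le> sqrt (1 + p\<^sup>2)"
  by (auto simp: add_pos_nonneg real_le_rsqrt)

(* The statement measures the cubic energy with powr; the proof works with sqrt (...) ^ 3. *)
lemma gradient_weight_powr: "(1 + (p::real)\<^sup>2) powr (3/2) = sqrt (1 + p\<^sup>2) ^ 3"
proof -
  have "(1 + p\<^sup>2) powr (3/2) = (1 + p\<^sup>2) powr (1 + 1/2)" by simp
  also have "\<dots> = (1 + p\<^sup>2) powr 1 * (1 + p\<^sup>2) powr (1/2)"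
    by (rule powr_add)
  also have "\<dots> = sqrt (1 + p\<^sup>2) ^ 3"
    using gradient_weight_pos[of p] gradient_weight_sqrt_sq[of p]
    by (simp add: powr_half_sqrt power3_eq_cube)
  finally show ?thesis .
qed

lemma gradient_weight_le_cube: "1 + (p::real)\<^sup>2 \<le> sqrt (1 + p\<^sup>2) ^ 3"
proof -
  have "(1 + p\<^sup>2) * 1 \<le> (1 + p\<^sup>2) * sqrt (1 + p\<^sup>2)"
    by (rule mult_left_mono) (auto simp: add_nonneg_nonneg)
  then show ?thesis using gradient_weight_sqrt_sq[of p] by (simp add: power3_eq_cube)
qed

(* Specialisations of the drift bound to the second derivatives of the three energy densities:
   w^(-3/2) for the length, 1/w for F, and 3 sqrt w + 3 p^2/sqrt w for w^(3/2). *)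
lemma length_drift_bound:
  fixes p Q V M :: real
  assumes "\<bar>V - Q / (1 + p\<^sup>2)\<bar> \<le> M * sqrt (1 + p\<^sup>2)"
  shows "- (1 / sqrt (1 + p\<^sup>2) ^ 3 * Q * V) \<le> M\<^sup>2 / 4 * sqrt (1 + p\<^sup>2)"
proof -
  define s where "s = sqrt (1 + p\<^sup>2)"
  have s: "s > 0" "1 + p\<^sup>2 = s * s" unfolding s_def by (simp_all add: gradient_weight)
  have "- (1 / s ^ 3 * Q * V) \<le> 1 / s ^ 3 * (1 + p\<^sup>2)\<^sup>2 * M\<^sup>2 / 4"
    by (rule drift_term_young[OF _ gradient_weight_pos]) (use assms in \<open>simp_all add: s_def\<close>)
  also have "\<dots> = M\<^sup>2 / 4 * s"
    using s by (simp add: s(2) field_simps power2_eq_square power3_eq_cube)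
  finally show ?thesis unfolding s_def .
qed

lemma entropy_drift_bound:
  fixes p Q V M :: real
  assumes "\<bar>V - Q / (1 + p\<^sup>2)\<bar> \<le> M * sqrt (1 + p\<^sup>2)"
  shows "- (1 / (1 + p\<^sup>2) * Q * V) \<le> M\<^sup>2 / 4 * (1 + p\<^sup>2)"
proof -
  have "- (1 / (1 + p\<^sup>2) * Q * V) \<le> 1 / (1 + p\<^sup>2) * (1 + p\<^sup>2)\<^sup>2 * M\<^sup>2 / 4"
    by (rule drift_term_young[OF _ gradient_weight_pos assms]) simp
  also have "\<dots> = M\<^sup>2 / 4 * (1 + p\<^sup>2)"
    using gradient_weight_pos[of p] by (simp add: field_simps power2_eq_square)
  finally show ?thesis .
qed

lemma cubic_drift_bound:
  fixes p Q V M :: real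
  assumes "\<bar>V - Q / (1 + p\<^sup>2)\<bar> \<le> M * sqrt (1 + p\<^sup>2)"
  shows "- ((3 * sqrt (1 + p\<^sup>2) + 3 * p\<^sup>2 / sqrt (1 + p\<^sup>2)) * Q * V)
           \<le> - (3/2) * (Q\<^sup>2 / sqrt (1 + p\<^sup>2)) + 3 * M\<^sup>2 * sqrt (1 + p\<^sup>2) ^ 5"
proof -
  define w where "w = 1 + p\<^sup>2"
  define s where "s = sqrt w"
  define k where "k = 3 * s + 3 * p\<^sup>2 / s"
  have s: "s > 0" "s * s = w" "w > 0"
    unfolding s_def w_def by (simp_all add: gradient_weight)
  have k_lower: "3 * s \<le> k" unfolding k_def using s by simp
  have k_upper: "k \<le> 6 * s"
    unfolding k_def using s by (simp add: field_simps w_def)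
  have "- (k * Q * V) \<le> - (k * Q\<^sup>2 / (2 * w)) + k * w\<^sup>2 * M\<^sup>2 / 2"
    by (rule drift_term_absorb) (use assms s k_lower in \<open>auto simp: w_def\<close>)
  also have "\<dots> \<le> - (3 * s * Q\<^sup>2 / (2 * w)) + 6 * s * w\<^sup>2 * M\<^sup>2 / 2"
    using s k_lower k_upper
    by (intro add_mono divide_right_mono mult_right_mono le_imp_neg_le) auto
  also have "\<dots> = - (3/2) * (Q\<^sup>2 / s) + 3 * M\<^sup>2 * s ^ 5"
    using s by (simp flip: s(2) add: field_simps power2_eq_square eval_nat_numeral)
  finally show ?thesis unfolding k_def s_def w_def .
qed

(* Young's inequality for the derivative 2 p u_xx of w, weighted so that the result is controlled
   by the cubic energy density and the dissipation density u_xx^2 / sqrt w. *)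
lemma slope_variation_young:
  fixes lam p Q :: real
  assumes "lam > 0"
  shows "\<bar>2 * p * Q\<bar> \<le> lam * sqrt (1 + p\<^sup>2) ^ 3 + Q\<^sup>2 / (lam * sqrt (1 + p\<^sup>2))"
proof -
  define s where "s = sqrt (1 + p\<^sup>2)"
  have s: "s > 0" "\<bar>p\<bar> \<le> s" unfolding s_def by (simp_all add: gradient_weight)
  have "\<bar>2 * p * Q\<bar> \<le> 2 * s * \<bar>Q\<bar>" using s by (simp add: abs_mult mult_right_mono)
  also have "\<dots> \<le> lam * s ^ 3 + Q\<^sup>2 / (lam * s)"
  proof -
    have "0 \<le> (lam * s * s - \<bar>Q\<bar>)\<^sup>2 / (lam * s)" using s assms by simp
    also have "\<dots> = lam * s ^ 3 + Q\<^sup>2 / (lam * s) - 2 * s * \<bar>Q\<bar>"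
      using s assms by (simp add: field_simps power2_eq_square power3_eq_cube abs_mult_self_eq)
    finally show ?thesis by simp
  qed
  finally show ?thesis unfolding s_def .
qed

definition estimate_constant :: "real \<Rightarrow> real" where
  "estimate_constant M = 1 + 9 * M\<^sup>2 + 6 * M ^ 4"

lemma estimate_constant_ge: "M\<^sup>2 / 4 \<le> estimate_constant M" "1 \<le> estimate_constant M"
  unfolding estimate_constant_def by (simp_all add: zero_le_even_power)

(* The final bookkeeping for the cubic estimate: with I the cubic energy, G the dissipation and
   J = \<integral> w^(5/2) <= (sup w) I, choosing lam = 2 (M^2+1) I absorbs the G-part of sup w. *)
lemma cubic_energy_arithmetic:
  fixes I G J d M :: real
  defines "lam \<equiv> 2 * (M\<^sup>2 + 1) * I"
  assumes I: "I \<ge> 1" and G: "G \<ge> 0"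
    and d: "d \<le> - (3/2) * G + 3 * M\<^sup>2 * J"
    and J: "J \<le> (I + lam * I + G / lam) * I"
  shows "d \<le> estimate_constant M + estimate_constant M * I ^ 3"
proof -
  have m: "M\<^sup>2 + 1 > 0" by (simp add: add_nonneg_pos)
  have "3 * M\<^sup>2 * J \<le> 3 * M\<^sup>2 * ((I + lam * I + G / lam) * I)"
    using J by (intro mult_left_mono) auto
  also have "\<dots> = 3 * M\<^sup>2 * I\<^sup>2 + 6 * M\<^sup>2 * (M\<^sup>2 + 1) * I ^ 3 + (M\<^sup>2 / (M\<^sup>2 + 1)) * ((3/2) * G)"
  proof -
    have "G / lam * I = G / (2 * (M\<^sup>2 + 1))" using I unfolding lam_def by simp
    then have "(I + lam * I + G / lam) * I = I\<^sup>2 + 2 * (M\<^sup>2 + 1) * I ^ 3 + G / (2 * (M\<^sup>2 + 1))"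
      unfolding lam_def by (simp add: algebra_simps power2_eq_square power3_eq_cube)
    moreover have "3 * M\<^sup>2 * (G / (2 * (M\<^sup>2 + 1))) = M\<^sup>2 / (M\<^sup>2 + 1) * ((3/2) * G)"
      by (simp add: field_simps)
    ultimately show ?thesis by (simp add: distrib_left)
  qed
  also have "\<dots> \<le> 3 * M\<^sup>2 * I ^ 3 + 6 * M\<^sup>2 * (M\<^sup>2 + 1) * I ^ 3 + (3/2) * G"
  proof (intro add_mono mult_left_mono)
    show "I\<^sup>2 \<le> I ^ 3" using I by (simp add: power2_eq_square power3_eq_cube)
    show "M\<^sup>2 / (M\<^sup>2 + 1) * (3 / 2 * G) \<le> 3 / 2 * G"
      using G m by (intro mult_left_le_one_le) auto
  qed simp_all
  finally have "d \<le> (9 * M\<^sup>2 + 6 * M ^ 4) * I ^ 3"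
    using d by (simp add: algebra_simps power2_eq_square power4_eq_xxxx)
  also have "\<dots> \<le> estimate_constant M * I ^ 3"
    using I unfolding estimate_constant_def by simp
  also have "\<dots> \<le> estimate_constant M + estimate_constant M * I ^ 3"
    using estimate_constant_ge(2)[of M] by simp
  finally show ?thesis .
qed

lemma gradient_weight_continuous:
  "continuous_on UNIV (\<lambda>p::real. 1 / sqrt (1 + p\<^sup>2) ^ 3)"
  "continuous_on UNIV (\<lambda>p::real. 1 / (1 + p\<^sup>2))"
  "continuous_on UNIV (\<lambda>p::real. 1 / sqrt (1 + p\<^sup>2))"
  "continuous_on UNIV (\<lambda>p::real. 3 * sqrt (1 + p\<^sup>2) + 3 * p\<^sup>2 / sqrt (1 + p\<^sup>2))"
  by (intro continuous_intros; simp add: gradient_weight_pos gradient_weight_sqrt_pos[THEN less_imp_neq, symmetric]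
      gradient_weight_pos[THEN less_imp_neq, symmetric])+

lemma length_profile_derivatives:
  "((\<lambda>p. sqrt (1 + p\<^sup>2)) has_real_derivative p / sqrt (1 + p\<^sup>2)) (at p)"
  "((\<lambda>p. p / sqrt (1 + p\<^sup>2)) has_real_derivative 1 / sqrt (1 + p\<^sup>2) ^ 3) (at p)"
  using gradient_weight_pos[of p] gradient_weight_sqrt_pos[of p] gradient_weight_sqrt_sq[of p]
  by (auto intro!: derivative_eq_intros simp: field_simps power3_eq_cube power2_eq_square)

lemma entropy_profile_derivatives:
  "(Fat has_real_derivative arctan p) (at p)"
  "(arctan has_real_derivative 1 / (1 + p\<^sup>2)) (at p)"
proof -
  show "(Fat has_real_derivative arctan p) (at p)"
    unfolding Fat_def using gradient_weight_pos[of p] gradient_weight_sqrt_pos[of p] gradient_weight_sqrt_sq[of p]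
    by (auto intro!: derivative_eq_intros) (simp add: field_simps power2_eq_square)
  show "(arctan has_real_derivative 1 / (1 + p\<^sup>2)) (at p)"
    using DERIV_arctan[of p] by (simp add: divide_inverse)
qed

lemma cubic_profile_derivatives:
  "((\<lambda>p. sqrt (1 + p\<^sup>2) ^ 3) has_real_derivative 3 * p * sqrt (1 + p\<^sup>2)) (at p)"
  "((\<lambda>p. 3 * p * sqrt (1 + p\<^sup>2)) has_real_derivative
      3 * sqrt (1 + p\<^sup>2) + 3 * p\<^sup>2 / sqrt (1 + p\<^sup>2)) (at p)"
  using gradient_weight_pos[of p] gradient_weight_sqrt_pos[of p] gradient_weight_sqrt_sq[of p]
  by (auto intro!: derivative_eq_intros) (simp_all add: field_simps power2_eq_square)

lemma partials_family_continuous_slice: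
  assumes "partials_family A B f D" "t \<in> B"
  shows "continuous_on A (\<lambda>x. D i j x t)"
proof -
  have "continuous_on (A \<times> B) (\<lambda>z. D i j (fst z) (snd z))"
    using assms(1) unfolding partials_family_def by blast
  from continuous_on_compose2[OF this continuous_on_Pair[OF continuous_on_id continuous_on_const]]
  show ?thesis using assms(2) by auto
qed

lemma partials_family_continuous_swap:
  assumes "partials_family A B f D"
  shows "continuous_on (B \<times> A) (\<lambda>(s, x). D i j x s)"
proof -
  have "continuous_on (A \<times> B) (\<lambda>z. D i j (fst z) (snd z))"
    using assms unfolding partials_family_def by blast
  from continuous_on_compose2[OF this continuous_on_swap]
  show ?thesis by (simp add: case_prod_beta product_swap)
qed

lemma partials_family_deriv_x:
  assumes "partials_family A B f D" "x \<in> A" "t \<in> B"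
  shows "((\<lambda>s. D i j s t) has_real_derivative D (Suc i) j x t) (at x within A)"
  using assms unfolding partials_family_def by blast

lemma partials_family_deriv_t:
  assumes "partials_family A B f D" "x \<in> A" "t \<in> B"
  shows "((\<lambda>s. D i j x s) has_real_derivative D i (Suc j) x t) (at t within B)"
  using assms unfolding partials_family_def by blast

(* One-sided derivatives on a nondegenerate closed interval are unique; this identifies the
   derivatives in the hypotheses with the members of the family D. *)
lemma has_real_derivative_unique_Icc:
  fixes a b :: real
  assumes "a < b" "x \<in> {a..b}" "(f has_real_derivative d1) (at x within {a..b})"
    "(f has_real_derivative d2) (at x within {a..b})"
  shows "d1 = d2"
  using vector_derivative_unique_within_closed_interval[of a b x f d1 d2] assms
  by (simp add: has_real_derivative_iff_has_vector_derivative)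

(* Two functions with the same increments on [0,T] have the same derivatives; this turns the
   boundary condition u(0,t) - u(0,0) = u(1,t) - u(1,0) into periodicity of u_t. *)
lemma equal_increments_same_derivative:
  fixes a b :: "real \<Rightarrow> real"
  assumes T: "T > 0" and incr: "\<And>s. s \<in> {0..T} \<Longrightarrow> a s - a 0 = b s - b 0" and t: "t \<in> {0..T}"
    and da: "(a has_real_derivative da) (at t within {0..T})"
    and db: "(b has_real_derivative db) (at t within {0..T})"
  shows "da = db"
proof -
  have "((\<lambda>s. a s - b s) has_real_derivative da - db) (at t within {0..T})"
    by (rule DERIV_diff[OF da db])
  moreover have "((\<lambda>s. a s - b s) has_real_derivative 0) (at t within {0..T})"
    using incr by (intro has_field_derivative_transform_within[OF DERIV_const[of "a 0 - b 0"]
        zero_less_one t]) (auto simp: algebra_simps)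
  ultimately show ?thesis using has_real_derivative_unique_Icc[OF T t] by force
qed

lemma oscillation_le_integral_abs_derivative:
  fixes f f' :: "real \<Rightarrow> real"
  assumes deriv: "\<And>x. x \<in> {0..1} \<Longrightarrow> (f has_real_derivative f' x) (at x within {0..1})"
    and cont: "continuous_on {0..1} f'" and x: "x \<in> {0..1}" and y: "y \<in> {0..1}"
  shows "f x - f y \<le> integral {0..1} (\<lambda>z. \<bar>f' z\<bar>)"
proof -
  have abs_int: "(\<lambda>z. \<bar>f' z\<bar>) integrable_on S" if "S \<subseteq> {0..1}" "S = {a..b}" for S a b
    using that by (auto intro!: integrable_continuous_real continuous_intros continuous_on_subset[OF cont])
  have "\<bar>f b - f a\<bar> \<le> integral {0..1} (\<lambda>z. \<bar>f' z\<bar>)"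
    if ab: "a \<in> {0..1}" "b \<in> {0..1}" "a \<le> b" for a b
  proof -
    have sub: "{a..b} \<subseteq> {0..1}" using ab by auto
    have "(f' has_integral (f b - f a)) {a..b}"
      using ab(3) DERIV_subset[OF deriv sub] sub
      by (intro fundamental_theorem_of_calculus) (auto simp: has_real_derivative_iff_has_vector_derivative)
    then have "\<bar>f b - f a\<bar> = norm (integral {a..b} f')" by (simp add: integral_unique)
    also have "\<dots> \<le> integral {a..b} (\<lambda>z. \<bar>f' z\<bar>)"
      using sub by (intro integral_norm_bound_integral integrable_continuous_real continuous_on_subset[OF cont]
          abs_int[OF sub]) auto
    also have "\<dots> \<le> integral {0..1} (\<lambda>z. \<bar>f' z\<bar>)"
      using sub by (intro integral_subset_le abs_int) auto
    finally show ?thesis .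
  qed
  from this[OF x y] this[OF y x] show ?thesis by (cases "y \<le> x") auto
qed

lemma integral_slope_agree:
  assumes "\<forall>x\<in>{0..1}. \<forall>s\<in>{0..T}. ux x s = p x s" "t \<in> {0..T}"
  shows "integral {0..1} (\<lambda>x. \<Phi> (ux x t)) = integral {0..1} (\<lambda>x. \<Phi> (p x t))"
  using assms by (intro integral_cong) auto

lemma integral_slope_derivative_agree:
  assumes agree: "\<forall>x\<in>{0..1}. \<forall>s\<in>{0..T}. ux x s = p x s" and t: "t \<in> {0..T}"
    and deriv: "((\<lambda>s. integral {0..1} (\<lambda>x. \<Phi> (p x s))) has_real_derivative d) (at t within {0..T})"
  shows "((\<lambda>s. integral {0..1} (\<lambda>x. \<Phi> (ux x s))) has_real_derivative d) (at t within {0..T})"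
  by (rule has_field_derivative_transform_within[OF deriv zero_less_one t])
    (simp add: integral_slope_agree[OF agree])

(* A flow on [0,1] x [0,T] given by its family of partial derivatives (u_x = D 1 0, u_xx = D 2 0,
   u_t = D 0 1), periodic in x to first order, whose velocity deviates from the curvature term
   u_xx/(1+u_x^2) by at most M times the area element. *)
locale periodic_graph_flow =
  fixes u :: "real \<Rightarrow> real \<Rightarrow> real" and D :: "nat \<Rightarrow> nat \<Rightarrow> real \<Rightarrow> real \<Rightarrow> real"
    and T M :: real
  assumes partials: "partials_family {0..1} {0..T} u D"
    and periodic_speed: "\<And>t. t \<in> {0..T} \<Longrightarrow> D 0 1 0 t = D 0 1 1 t"
    and periodic_slope: "\<And>t. t \<in> {0..T} \<Longrightarrow> D 1 0 0 t = D 1 0 1 t"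
    and forcing_bound: "\<And>x t. x \<in> {0..1} \<Longrightarrow> t \<in> {0..T} \<Longrightarrow>
      \<bar>D 0 1 x t - D 2 0 x t / (1 + (D 1 0 x t)\<^sup>2)\<bar> \<le> M * sqrt (1 + (D 1 0 x t)\<^sup>2)"
begin

lemma slice_continuous: "t \<in> {0..T} \<Longrightarrow> continuous_on {0..1} (\<lambda>x. D i j x t)"
  using partials_family_continuous_slice[OF partials] .

lemma slope_integrable:
  fixes \<phi> :: "real \<Rightarrow> real"
  assumes "continuous_on UNIV \<phi>" "t \<in> {0..T}"
  shows "(\<lambda>x. \<phi> (D 1 0 x t)) integrable_on {0..1}"
proof (rule integrable_continuous_real)
  show "continuous_on {0..1} (\<lambda>x. \<phi> (D 1 0 x t))"
    by (rule continuous_on_compose2[OF assms(1) slice_continuous[OF assms(2)]]) auto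
qed

lemma energy_derivative_leibniz:
  assumes d1: "\<And>p. (\<Phi> has_real_derivative \<Phi>1 p) (at p)"
    and c1: "continuous_on UNIV \<Phi>1" and t: "t \<in> {0..T}"
  shows "((\<lambda>s. integral {0..1} (\<lambda>x. \<Phi> (D 1 0 x s))) has_real_derivative
           integral {0..1} (\<lambda>x. \<Phi>1 (D 1 0 x t) * D 1 1 x t)) (at t within {0..T})"
proof -
  have c0: "continuous_on UNIV \<Phi>"
    using d1 by (meson DERIV_isCont continuous_at_imp_continuous_on)
  have "((\<lambda>s. integral (cbox 0 1) (\<lambda>x. \<Phi> (D 1 0 x s))) has_real_derivative
           integral (cbox 0 1) (\<lambda>x. \<Phi>1 (D 1 0 x t) * D 1 1 x t)) (at t within {0..T})"
  proof (rule leibniz_rule_field_derivative)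
    fix s x :: real assume "s \<in> {0..T}" "x \<in> cbox 0 1"
    then show "((\<lambda>s. \<Phi> (D 1 0 x s)) has_real_derivative \<Phi>1 (D 1 0 x s) * D 1 1 x s) (at s within {0..T})"
      using DERIV_chain2[OF d1 partials_family_deriv_t[OF partials]] by simp
  next
    show "continuous_on ({0..T} \<times> cbox 0 1) (\<lambda>(s, x). \<Phi>1 (D 1 0 x s) * D 1 1 x s)"
      using continuous_on_compose2[OF c1 partials_family_continuous_swap[OF partials]]
        partials_family_continuous_swap[OF partials]
      by (auto simp: case_prod_beta intro!: continuous_intros)
  qed (use t slope_integrable[OF c0] in auto)
  then show ?thesis by simp
qed

(* Integration by parts in x; the boundary term Phi'(u_x) u_t vanishes by periodicity. *)
lemma periodic_integration_by_parts:
  assumes d2: "\<And>p. (\<Phi>1 has_real_derivative \<Phi>2 p) (at p)"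
    and c2: "continuous_on UNIV \<Phi>2" and t: "t \<in> {0..T}"
  shows "integral {0..1} (\<lambda>x. \<Phi>1 (D 1 0 x t) * D 1 1 x t)
           = - integral {0..1} (\<lambda>x. \<Phi>2 (D 1 0 x t) * D 2 0 x t * D 0 1 x t)"
proof -
  have c1: "continuous_on UNIV \<Phi>1"
    using d2 by (meson DERIV_isCont continuous_at_imp_continuous_on)
  define h where "h = (\<lambda>x. \<Phi>1 (D 1 0 x t) * D 0 1 x t)"
  have "(h has_vector_derivative
          \<Phi>2 (D 1 0 x t) * D 2 0 x t * D 0 1 x t + \<Phi>1 (D 1 0 x t) * D 1 1 x t) (at x within {0..1})"
    if x: "x \<in> {0..1}" for x
    using DERIV_mult[OF DERIV_chain2[OF d2 partials_family_deriv_x[OF partials x t, of 1 0]]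
        partials_family_deriv_x[OF partials x t, of 0 1]]
    by (simp add: h_def has_real_derivative_iff_has_vector_derivative algebra_simps numeral_2_eq_2)
  then have "((\<lambda>x. \<Phi>2 (D 1 0 x t) * D 2 0 x t * D 0 1 x t + \<Phi>1 (D 1 0 x t) * D 1 1 x t)
               has_integral (h 1 - h 0)) {0..1}"
    by (intro fundamental_theorem_of_calculus) auto
  moreover have "h 1 - h 0 = 0"
    using periodic_speed[OF t] periodic_slope[OF t] by (simp add: h_def)
  ultimately have "integral {0..1}
      (\<lambda>x. \<Phi>2 (D 1 0 x t) * D 2 0 x t * D 0 1 x t + \<Phi>1 (D 1 0 x t) * D 1 1 x t) = 0"
    by (simp add: integral_unique)
  moreover have "(\<lambda>x. \<Phi>2 (D 1 0 x t) * D 2 0 x t * D 0 1 x t) integrable_on {0..1}"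
    "(\<lambda>x. \<Phi>1 (D 1 0 x t) * D 1 1 x t) integrable_on {0..1}"
    using t by (auto intro!: integrable_continuous_real continuous_intros slice_continuous
        continuous_on_compose2[OF c2 slice_continuous] continuous_on_compose2[OF c1 slice_continuous])
  ultimately show ?thesis by (simp add: integral_add)
qed

lemma energy_derivative_bound:
  fixes B :: "real \<Rightarrow> real"
  assumes d1: "\<And>p. (\<Phi> has_real_derivative \<Phi>1 p) (at p)"
    and d2: "\<And>p. (\<Phi>1 has_real_derivative \<Phi>2 p) (at p)"
    and c2: "continuous_on UNIV \<Phi>2" and t: "t \<in> {0..T}"
    and B: "B integrable_on {0..1}"
    and bound: "\<And>x. x \<in> {0..1} \<Longrightarrow> - (\<Phi>2 (D 1 0 x t) * D 2 0 x t * D 0 1 x t) \<le> B x"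
  shows "\<exists>d. ((\<lambda>s. integral {0..1} (\<lambda>x. \<Phi> (D 1 0 x s))) has_real_derivative d) (at t within {0..T})
             \<and> d \<le> integral {0..1} B"
proof (intro exI conjI)
  have c1: "continuous_on UNIV \<Phi>1"
    using d2 by (meson DERIV_isCont continuous_at_imp_continuous_on)
  show "((\<lambda>s. integral {0..1} (\<lambda>x. \<Phi> (D 1 0 x s))) has_real_derivative
          - integral {0..1} (\<lambda>x. \<Phi>2 (D 1 0 x t) * D 2 0 x t * D 0 1 x t)) (at t within {0..T})"
    using energy_derivative_leibniz[OF d1 c1 t] periodic_integration_by_parts[OF d2 c2 t] by simp
  have "(\<lambda>x. - (\<Phi>2 (D 1 0 x t) * D 2 0 x t * D 0 1 x t)) integrable_on {0..1}"
    using t by (auto intro!: integrable_continuous_real continuous_intros slice_continuous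
        continuous_on_compose2[OF c2 slice_continuous])
  from integral_le[OF this B bound]
  show "- integral {0..1} (\<lambda>x. \<Phi>2 (D 1 0 x t) * D 2 0 x t * D 0 1 x t) \<le> integral {0..1} B"
    by (simp add: integral_neg)
qed

lemma length_estimate:
  assumes t: "t \<in> {0..T}"
  shows "\<exists>d. ((\<lambda>s. integral {0..1} (\<lambda>x. sqrt (1 + (D 1 0 x s)\<^sup>2))) has_real_derivative d)
               (at t within {0..T})
             \<and> d \<le> estimate_constant M * integral {0..1} (\<lambda>x. sqrt (1 + (D 1 0 x t)\<^sup>2))"
proof -
  have int: "(\<lambda>x. sqrt (1 + (D 1 0 x t)\<^sup>2)) integrable_on {0..1}"
    by (rule slope_integrable[OF _ t]) (intro continuous_intros)
  obtain d where d: "((\<lambda>s. integral {0..1} (\<lambda>x. sqrt (1 + (D 1 0 x s)\<^sup>2))) has_real_derivative d)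
      (at t within {0..T})" "d \<le> integral {0..1} (\<lambda>x. M\<^sup>2 / 4 * sqrt (1 + (D 1 0 x t)\<^sup>2))"
    using energy_derivative_bound[OF length_profile_derivatives gradient_weight_continuous(1) t
        integrable_on_mult_right[OF int] length_drift_bound[OF forcing_bound[OF _ t]]] by blast
  have "d \<le> M\<^sup>2 / 4 * integral {0..1} (\<lambda>x. sqrt (1 + (D 1 0 x t)\<^sup>2))" using d(2) by simp
  also have "\<dots> \<le> estimate_constant M * integral {0..1} (\<lambda>x. sqrt (1 + (D 1 0 x t)\<^sup>2))"
    using estimate_constant_ge(1) by (intro mult_right_mono integral_nonneg int) auto
  finally show ?thesis using d(1) by blast
qed

lemma entropy_estimate:
  assumes t: "t \<in> {0..T}"
  shows "\<exists>d. ((\<lambda>s. integral {0..1} (\<lambda>x. Fat (D 1 0 x s))) has_real_derivative d) (at t within {0..T})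
             \<and> d \<le> estimate_constant M * integral {0..1} (\<lambda>x. 1 + (D 1 0 x t)\<^sup>2)"
proof -
  have int: "(\<lambda>x. 1 + (D 1 0 x t)\<^sup>2) integrable_on {0..1}"
    by (rule slope_integrable[OF _ t]) (intro continuous_intros)
  obtain d where d: "((\<lambda>s. integral {0..1} (\<lambda>x. Fat (D 1 0 x s))) has_real_derivative d)
      (at t within {0..T})" "d \<le> integral {0..1} (\<lambda>x. M\<^sup>2 / 4 * (1 + (D 1 0 x t)\<^sup>2))"
    using energy_derivative_bound[OF entropy_profile_derivatives gradient_weight_continuous(2) t
        integrable_on_mult_right[OF int] entropy_drift_bound[OF forcing_bound[OF _ t]]] by blast
  have "d \<le> M\<^sup>2 / 4 * integral {0..1} (\<lambda>x. 1 + (D 1 0 x t)\<^sup>2)" using d(2) by simp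
  also have "\<dots> \<le> estimate_constant M * integral {0..1} (\<lambda>x. 1 + (D 1 0 x t)\<^sup>2)"
    using estimate_constant_ge(1) by (intro mult_right_mono integral_nonneg int) (auto simp: add_nonneg_nonneg)
  finally show ?thesis using d(1) by blast
qed

abbreviation cubic_energy :: "real \<Rightarrow> real" where
  "cubic_energy t \<equiv> integral {0..1} (\<lambda>x. sqrt (1 + (D 1 0 x t)\<^sup>2) ^ 3)"

abbreviation curvature_dissipation :: "real \<Rightarrow> real" where
  "curvature_dissipation t \<equiv> integral {0..1} (\<lambda>x. (D 2 0 x t)\<^sup>2 / sqrt (1 + (D 1 0 x t)\<^sup>2))"

lemma curvature_dissipation_integrable:
  "t \<in> {0..T} \<Longrightarrow> (\<lambda>x. (D 2 0 x t)\<^sup>2 / sqrt (1 + (D 1 0 x t)\<^sup>2)) integrable_on {0..1}"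
proof -
  assume t: "t \<in> {0..T}"
  have "continuous_on {0..1} (\<lambda>x. (D 2 0 x t)\<^sup>2 * (1 / sqrt (1 + (D 1 0 x t)\<^sup>2)))"
    by (intro continuous_intros slice_continuous[OF t]
        continuous_on_compose2[OF gradient_weight_continuous(3) slice_continuous[OF t]]) auto
  from integrable_continuous_real[OF this] show ?thesis by simp
qed

lemma cubic_dissipation_estimate:
  assumes t: "t \<in> {0..T}"
  shows "\<exists>d. (cubic_energy has_real_derivative d) (at t within {0..T})
             \<and> d \<le> - (3/2) * curvature_dissipation t
                    + 3 * M\<^sup>2 * integral {0..1} (\<lambda>x. sqrt (1 + (D 1 0 x t)\<^sup>2) ^ 5)"
proof -
  have G: "(\<lambda>x. (D 2 0 x t)\<^sup>2 / sqrt (1 + (D 1 0 x t)\<^sup>2)) integrable_on {0..1}"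
    by (rule curvature_dissipation_integrable[OF t])
  have J: "(\<lambda>x. sqrt (1 + (D 1 0 x t)\<^sup>2) ^ 5) integrable_on {0..1}"
    by (rule slope_integrable[OF _ t]) (intro continuous_intros)
  have "\<exists>d. (cubic_energy has_real_derivative d) (at t within {0..T})
      \<and> d \<le> integral {0..1} (\<lambda>x. - (3/2) * ((D 2 0 x t)\<^sup>2 / sqrt (1 + (D 1 0 x t)\<^sup>2))
                                  + 3 * M\<^sup>2 * sqrt (1 + (D 1 0 x t)\<^sup>2) ^ 5)"
    by (rule energy_derivative_bound[OF cubic_profile_derivatives gradient_weight_continuous(4) t
          integrable_add[OF integrable_on_mult_right[OF G] integrable_on_mult_right[OF J]]
          cubic_drift_bound[OF forcing_bound[OF _ t]]])
  moreover have "integral {0..1} (\<lambda>x. - (3/2) * ((D 2 0 x t)\<^sup>2 / sqrt (1 + (D 1 0 x t)\<^sup>2))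
                                  + 3 * M\<^sup>2 * sqrt (1 + (D 1 0 x t)\<^sup>2) ^ 5)
      = - (3/2) * curvature_dissipation t + 3 * M\<^sup>2 * integral {0..1} (\<lambda>x. sqrt (1 + (D 1 0 x t)\<^sup>2) ^ 5)"
    by (simp only: integral_add[OF integrable_on_mult_right[OF G] integrable_on_mult_right[OF J]]
        integral_mult_right)
  ultimately show ?thesis by simp
qed

(* Pointwise control of w by its mean plus its total variation, the latter bounded by
   lam times the cubic energy plus the dissipation divided by lam. *)
lemma slope_sup_bound:
  assumes t: "t \<in> {0..T}" and x: "x \<in> {0..1}" and lam: "lam > 0"
  shows "1 + (D 1 0 x t)\<^sup>2 \<le> integral {0..1} (\<lambda>y. 1 + (D 1 0 y t)\<^sup>2)
                              + lam * cubic_energy t + curvature_dissipation t / lam"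
proof -
  define f' where "f' y = 2 * D 1 0 y t * D 2 0 y t" for y
  define L where "L = integral {0..1} (\<lambda>y. \<bar>f' y\<bar>)"
  have f': "((\<lambda>y. 1 + (D 1 0 y t)\<^sup>2) has_real_derivative f' y) (at y within {0..1})"
    if "y \<in> {0..1}" for y
    using DERIV_add[OF DERIV_const[of 1] DERIV_power[OF partials_family_deriv_x[OF partials that t, of 1 0], of 2]]
    by (simp add: f'_def numeral_2_eq_2 algebra_simps)
  have cont_f': "continuous_on {0..1} f'"
    unfolding f'_def by (intro continuous_intros slice_continuous[OF t])
  have W: "(\<lambda>y. 1 + (D 1 0 y t)\<^sup>2) integrable_on {0..1}"
    by (rule slope_integrable[OF _ t]) (intro continuous_intros)
  \<comment> \<open>the value at x exceeds every other value by at most the total variation L, hence also the mean\<close>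
  have "integral {0..1} (\<lambda>y::real. 1 + (D 1 0 x t)\<^sup>2 - L) \<le> integral {0..1} (\<lambda>y. 1 + (D 1 0 y t)\<^sup>2)"
    using oscillation_le_integral_abs_derivative[OF f' cont_f' x] unfolding L_def
    by (intro integral_le W) (force simp: algebra_simps)+
  then have "1 + (D 1 0 x t)\<^sup>2 \<le> integral {0..1} (\<lambda>y. 1 + (D 1 0 y t)\<^sup>2) + L" by simp
  also have "L \<le> integral {0..1} (\<lambda>y. lam * sqrt (1 + (D 1 0 y t)\<^sup>2) ^ 3
                                      + (1 / lam) * ((D 2 0 y t)\<^sup>2 / sqrt (1 + (D 1 0 y t)\<^sup>2)))"
    unfolding L_def
  proof (rule integral_le)
    show "(\<lambda>y. \<bar>f' y\<bar>) integrable_on {0..1}"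
      by (intro integrable_continuous_real continuous_intros cont_f')
    show "(\<lambda>y. lam * sqrt (1 + (D 1 0 y t)\<^sup>2) ^ 3
               + (1 / lam) * ((D 2 0 y t)\<^sup>2 / sqrt (1 + (D 1 0 y t)\<^sup>2))) integrable_on {0..1}"
      by (intro integrable_add integrable_on_mult_right slope_integrable[OF _ t]
          curvature_dissipation_integrable[OF t] continuous_intros)
    fix y
    show "\<bar>f' y\<bar> \<le> lam * sqrt (1 + (D 1 0 y t)\<^sup>2) ^ 3
                    + (1 / lam) * ((D 2 0 y t)\<^sup>2 / sqrt (1 + (D 1 0 y t)\<^sup>2))"
      using slope_variation_young[OF lam, of "D 1 0 y t" "D 2 0 y t"] by (simp add: f'_def)
  qed
  also have "\<dots> = lam * cubic_energy t + curvature_dissipation t / lam"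
  proof -
    have I: "(\<lambda>y. sqrt (1 + (D 1 0 y t)\<^sup>2) ^ 3) integrable_on {0..1}"
      by (rule slope_integrable[OF _ t]) (intro continuous_intros)
    show ?thesis
      by (simp only: integral_add[OF integrable_on_mult_right[OF I]
          integrable_on_mult_right[OF curvature_dissipation_integrable[OF t]]] integral_mult_right) simp
  qed
  finally show ?thesis by simp
qed

lemma cubic_estimate:
  assumes t: "t \<in> {0..T}"
  shows "\<exists>d. (cubic_energy has_real_derivative d) (at t within {0..T})
             \<and> d \<le> estimate_constant M + estimate_constant M * cubic_energy t ^ 3"
proof -
  define I where "I = cubic_energy t"
  define G where "G = curvature_dissipation t"
  define lam where "lam = 2 * (M\<^sup>2 + 1) * I"
  obtain d where deriv: "(cubic_energy has_real_derivative d) (at t within {0..T})"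
    and d: "d \<le> - (3/2) * G + 3 * M\<^sup>2 * integral {0..1} (\<lambda>x. sqrt (1 + (D 1 0 x t)\<^sup>2) ^ 5)"
    using cubic_dissipation_estimate[OF t] unfolding G_def by blast
  have int_I: "(\<lambda>x. sqrt (1 + (D 1 0 x t)\<^sup>2) ^ 3) integrable_on {0..1}"
    and int_J: "(\<lambda>x. sqrt (1 + (D 1 0 x t)\<^sup>2) ^ 5) integrable_on {0..1}"
    and int_W: "(\<lambda>x. 1 + (D 1 0 x t)\<^sup>2) integrable_on {0..1}"
    by (rule slope_integrable[OF _ t], intro continuous_intros)+
  have I_ge_1: "I \<ge> 1"
    using integral_le[OF integrable_const_ivl int_I, of 1]
    unfolding I_def by (force intro: order_trans[OF _ gradient_weight_le_cube])
  have G_nonneg: "G \<ge> 0"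
    unfolding G_def by (intro integral_nonneg curvature_dissipation_integrable[OF t]) simp
  have lam_pos: "lam > 0" unfolding lam_def using I_ge_1 by (simp add: add_nonneg_pos)
  have W_le_I: "integral {0..1} (\<lambda>x. 1 + (D 1 0 x t)\<^sup>2) \<le> I"
    unfolding I_def by (intro integral_le int_W int_I gradient_weight_le_cube)
  have "integral {0..1} (\<lambda>x. sqrt (1 + (D 1 0 x t)\<^sup>2) ^ 5)
          \<le> integral {0..1} (\<lambda>x. (I + lam * I + G / lam) * sqrt (1 + (D 1 0 x t)\<^sup>2) ^ 3)"
  proof (intro integral_le int_J integrable_on_mult_right[OF int_I])
    fix x :: real assume x: "x \<in> {0..1}"
    have "sqrt (1 + (D 1 0 x t)\<^sup>2) ^ 5 = (1 + (D 1 0 x t)\<^sup>2) * sqrt (1 + (D 1 0 x t)\<^sup>2) ^ 3"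
      by (simp flip: gradient_weight_sqrt_sq add: eval_nat_numeral)
    also have "\<dots> \<le> (I + lam * I + G / lam) * sqrt (1 + (D 1 0 x t)\<^sup>2) ^ 3"
      using slope_sup_bound[OF t x lam_pos] W_le_I unfolding I_def G_def
      by (intro mult_right_mono) auto
    finally show "sqrt (1 + (D 1 0 x t)\<^sup>2) ^ 5 \<le> (I + lam * I + G / lam) * sqrt (1 + (D 1 0 x t)\<^sup>2) ^ 3" .
  qed
  then have "integral {0..1} (\<lambda>x. sqrt (1 + (D 1 0 x t)\<^sup>2) ^ 5) \<le> (I + lam * I + G / lam) * I"
    unfolding I_def by simp
  from cubic_energy_arithmetic[OF I_ge_1 G_nonneg d this[unfolded lam_def]] deriv
  show ?thesis unfolding I_def by blast
qed

lemma energy_estimates: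
  assumes agree: "\<forall>x\<in>{0..1}. \<forall>s\<in>{0..T}. ux x s = D 1 0 x s" and t: "t \<in> {0..T}"
  defines "C \<equiv> estimate_constant M"
  shows "(\<exists>d. ((\<lambda>s. integral {0..1} (\<lambda>x. sqrt (1 + (ux x s)\<^sup>2))) has_real_derivative d) (at t within {0..T})
             \<and> d \<le> C * integral {0..1} (\<lambda>x. sqrt (1 + (ux x t)\<^sup>2))) \<and>
         (\<exists>d. ((\<lambda>s. integral {0..1} (\<lambda>x. Fat (ux x s))) has_real_derivative d) (at t within {0..T})
             \<and> d \<le> C * integral {0..1} (\<lambda>x. 1 + (ux x t)\<^sup>2)) \<and>
         (\<exists>d. ((\<lambda>s. integral {0..1} (\<lambda>x. (1 + (ux x s)\<^sup>2) powr (3/2))) has_real_derivative d) (at t within {0..T})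
             \<and> d \<le> C + C * (integral {0..1} (\<lambda>x. (1 + (ux x t)\<^sup>2) powr (3/2))) ^ 3)"
proof -
  note transfer = integral_slope_derivative_agree[OF agree t] integral_slope_agree[OF agree t]
  show ?thesis
  proof (intro conjI)
    obtain d where "((\<lambda>s. integral {0..1} (\<lambda>x. sqrt (1 + (D 1 0 x s)\<^sup>2))) has_real_derivative d)
        (at t within {0..T})" "d \<le> C * integral {0..1} (\<lambda>x. sqrt (1 + (D 1 0 x t)\<^sup>2))"
      using length_estimate[OF t] unfolding C_def by blast
    with transfer[of "\<lambda>p. sqrt (1 + p\<^sup>2)"]
    show "\<exists>d. ((\<lambda>s. integral {0..1} (\<lambda>x. sqrt (1 + (ux x s)\<^sup>2))) has_real_derivative d)
                 (at t within {0..T})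
               \<and> d \<le> C * integral {0..1} (\<lambda>x. sqrt (1 + (ux x t)\<^sup>2))" by auto
  next
    obtain d where "((\<lambda>s. integral {0..1} (\<lambda>x. Fat (D 1 0 x s))) has_real_derivative d)
        (at t within {0..T})" "d \<le> C * integral {0..1} (\<lambda>x. 1 + (D 1 0 x t)\<^sup>2)"
      using entropy_estimate[OF t] unfolding C_def by blast
    with transfer[of Fat] transfer[of "\<lambda>p. 1 + p\<^sup>2"]
    show "\<exists>d. ((\<lambda>s. integral {0..1} (\<lambda>x. Fat (ux x s))) has_real_derivative d) (at t within {0..T})
               \<and> d \<le> C * integral {0..1} (\<lambda>x. 1 + (ux x t)\<^sup>2)" by auto
  next
    obtain d where "(cubic_energy has_real_derivative d) (at t within {0..T})"
        "d \<le> C + C * cubic_energy t ^ 3"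
      using cubic_estimate[OF t] unfolding C_def by blast
    with transfer[of "\<lambda>p. sqrt (1 + p\<^sup>2) ^ 3"]
    show "\<exists>d. ((\<lambda>s. integral {0..1} (\<lambda>x. (1 + (ux x s)\<^sup>2) powr (3/2))) has_real_derivative d)
                 (at t within {0..T})
               \<and> d \<le> C + C * (integral {0..1} (\<lambda>x. (1 + (ux x t)\<^sup>2) powr (3/2))) ^ 3"
      unfolding gradient_weight_powr by auto
  qed
qed

end

lemma solution_is_periodic_graph_flow:
  fixes g u ux uxx ut :: "real \<Rightarrow> real \<Rightarrow> real" and D :: "nat \<Rightarrow> nat \<Rightarrow> real \<Rightarrow> real \<Rightarrow> real"
  assumes PF: "partials_family {0..1} {0..T} u D" and T: "T > 0"
    and sol: "\<forall>x\<in>{0..1}. \<forall>t\<in>{0..T}.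
       ((\<lambda>y. u y t) has_real_derivative ux x t) (at x within {0..1}) \<and>
       ((\<lambda>y. ux y t) has_real_derivative uxx x t) (at x within {0..1}) \<and>
       ((\<lambda>s. u x s) has_real_derivative ut x t) (at t within {0..T}) \<and>
       ut x t = uxx x t / (1 + (ux x t)\<^sup>2) + g x (u x t) * sqrt (1 + (ux x t)\<^sup>2)"
    and g_bound: "\<forall>x y. \<bar>g x y\<bar> \<le> M"
    and bc: "\<forall>t\<in>{0..T}. u 0 t - u 0 0 = u 1 t - u 1 0 \<and> ux 0 t = ux 1 t"
  shows "periodic_graph_flow u D T M \<and> (\<forall>x\<in>{0..1}. \<forall>t\<in>{0..T}. ux x t = D 1 0 x t)"
proof -
  have D00: "D 0 0 = u" using PF unfolding partials_family_def by blast
  note deriv_x = partials_family_deriv_x[OF PF] and deriv_t = partials_family_deriv_t[OF PF]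
  from sol have u_x: "((\<lambda>y. u y t) has_real_derivative ux x t) (at x within {0..1})"
    and ux_x: "((\<lambda>y. ux y t) has_real_derivative uxx x t) (at x within {0..1})"
    and u_t: "((\<lambda>s. u x s) has_real_derivative ut x t) (at t within {0..T})"
    and pde: "ut x t = uxx x t / (1 + (ux x t)\<^sup>2) + g x (u x t) * sqrt (1 + (ux x t)\<^sup>2)"
    if "x \<in> {0..1}" "t \<in> {0..T}" for x t
    using that by blast+
  have ux_eq: "ux x t = D 1 0 x t" if xt: "x \<in> {0..1}" "t \<in> {0..T}" for x t
    using has_real_derivative_unique_Icc[OF zero_less_one xt(1) u_x[OF xt] deriv_x[OF xt, of 0 0, unfolded D00]]
    by simp
  have uxx_eq: "uxx x t = D 2 0 x t" if xt: "x \<in> {0..1}" "t \<in> {0..T}" for x t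
  proof (rule has_real_derivative_unique_Icc[OF zero_less_one xt(1)])
    show "((\<lambda>y. D 1 0 y t) has_real_derivative uxx x t) (at x within {0..1})"
      using ux_eq[OF _ xt(2)] by (intro has_field_derivative_transform_within[OF ux_x[OF xt] zero_less_one xt(1)]) auto
    show "((\<lambda>y. D 1 0 y t) has_real_derivative D 2 0 x t) (at x within {0..1})"
      using deriv_x[OF xt, of 1 0] by (simp add: numeral_2_eq_2)
  qed
  have ut_eq: "ut x t = D 0 1 x t" if xt: "x \<in> {0..1}" "t \<in> {0..T}" for x t
    using has_real_derivative_unique_Icc[OF T xt(2) u_t[OF xt] deriv_t[OF xt, of 0 0, unfolded D00]]
    by simp
  have periodic_speed: "D 0 1 0 t = D 0 1 1 t" if t: "t \<in> {0..T}" for t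
    using equal_increments_same_derivative[OF T _ t deriv_t[of 0 t 0 0, unfolded D00]
        deriv_t[of 1 t 0 0, unfolded D00]] bc t by simp
  have "periodic_graph_flow u D T M"
  proof
    fix x t :: real assume xt: "x \<in> {0..1}" "t \<in> {0..T}"
    have "D 0 1 x t - D 2 0 x t / (1 + (D 1 0 x t)\<^sup>2) = g x (u x t) * sqrt (1 + (D 1 0 x t)\<^sup>2)"
      using pde[OF xt] by (simp add: ux_eq[OF xt] uxx_eq[OF xt] ut_eq[OF xt])
    then show "\<bar>D 0 1 x t - D 2 0 x t / (1 + (D 1 0 x t)\<^sup>2)\<bar> \<le> M * sqrt (1 + (D 1 0 x t)\<^sup>2)"
      using g_bound by (simp add: abs_mult mult_right_mono)
  qed (use PF periodic_speed bc ux_eq in auto)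
  with ux_eq show ?thesis by blast
qed

lemma solution_energy_estimates:
  fixes g u ux uxx ut :: "real \<Rightarrow> real \<Rightarrow> real"
  assumes smooth: "smooth2_on {0..1} {0..T} u" and T: "T > 0"
    and sol: "\<forall>x\<in>{0..1}. \<forall>t\<in>{0..T}.
       ((\<lambda>y. u y t) has_real_derivative ux x t) (at x within {0..1}) \<and>
       ((\<lambda>y. ux y t) has_real_derivative uxx x t) (at x within {0..1}) \<and>
       ((\<lambda>s. u x s) has_real_derivative ut x t) (at t within {0..T}) \<and>
       ut x t = uxx x t / (1 + (ux x t)\<^sup>2) + g x (u x t) * sqrt (1 + (ux x t)\<^sup>2)"
    and g_bound: "\<forall>x y. \<bar>g x y\<bar> \<le> M"
    and bc: "\<forall>t\<in>{0..T}. u 0 t - u 0 0 = u 1 t - u 1 0 \<and> ux 0 t = ux 1 t"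
    and t: "t \<in> {0..T}"
  defines "C \<equiv> estimate_constant M"
  shows "(\<exists>d. ((\<lambda>s. integral {0..1} (\<lambda>x. sqrt (1 + (ux x s)\<^sup>2))) has_real_derivative d) (at t within {0..T})
             \<and> d \<le> C * integral {0..1} (\<lambda>x. sqrt (1 + (ux x t)\<^sup>2))) \<and>
         (\<exists>d. ((\<lambda>s. integral {0..1} (\<lambda>x. Fat (ux x s))) has_real_derivative d) (at t within {0..T})
             \<and> d \<le> C * integral {0..1} (\<lambda>x. 1 + (ux x t)\<^sup>2)) \<and>
         (\<exists>d. ((\<lambda>s. integral {0..1} (\<lambda>x. (1 + (ux x s)\<^sup>2) powr (3/2))) has_real_derivative d) (at t within {0..T})
             \<and> d \<le> C + C * (integral {0..1} (\<lambda>x. (1 + (ux x t)\<^sup>2) powr (3/2))) ^ 3)"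
proof -
  obtain D where PF: "partials_family {0..1} {0..T} u D"
    using smooth unfolding smooth2_on_def by blast
  note flow = solution_is_periodic_graph_flow[OF PF T sol g_bound bc]
  show ?thesis
    unfolding C_def by (rule periodic_graph_flow.energy_estimates[OF flow[THEN conjunct1] flow[THEN conjunct2] t])
qed

theorem lemma2p15:
  fixes M :: real
  shows "\<exists>C>0. \<forall>(g :: real \<Rightarrow> real \<Rightarrow> real) (u :: real \<Rightarrow> real \<Rightarrow> real)
      (ux :: real \<Rightarrow> real \<Rightarrow> real) (uxx :: real \<Rightarrow> real \<Rightarrow> real) (ut :: real \<Rightarrow> real \<Rightarrow> real) (T :: real).
    smooth2_bounded_derivs g \<and>
    (\<forall>x y. g (x + 1) y = g x y \<and> g x (y + 1) = g x y) \<and>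
    (\<forall>x y. \<bar>g x y\<bar> \<le> M) \<and>
    T > 0 \<and>
    smooth2_on {0..1} {0..T} u \<and>
    (\<forall>x\<in>{0..1}. \<forall>t\<in>{0..T}.
       ((\<lambda>y. u y t) has_real_derivative ux x t) (at x within {0..1}) \<and>
       ((\<lambda>y. ux y t) has_real_derivative uxx x t) (at x within {0..1}) \<and>
       ((\<lambda>s. u x s) has_real_derivative ut x t) (at t within {0..T}) \<and>
       ut x t = uxx x t / (1 + (ux x t)\<^sup>2) + g x (u x t) * sqrt (1 + (ux x t)\<^sup>2)) \<and>
    (\<forall>t\<in>{0..T}. u 0 t - u 0 0 = u 1 t - u 1 0 \<and> ux 0 t = ux 1 t)
    \<longrightarrow>
    (\<forall>t\<in>{0..T}.
      (\<exists>d. ((\<lambda>s. integral {0..1} (\<lambda>x. sqrt (1 + (ux x s)\<^sup>2))) has_real_derivative d) (at t within {0..T})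
           \<and> d \<le> C * integral {0..1} (\<lambda>x. sqrt (1 + (ux x t)\<^sup>2))) \<and>
      (\<exists>d. ((\<lambda>s. integral {0..1} (\<lambda>x. Fat (ux x s))) has_real_derivative d) (at t within {0..T})
           \<and> d \<le> C * integral {0..1} (\<lambda>x. 1 + (ux x t)\<^sup>2)) \<and>
      (\<exists>d. ((\<lambda>s. integral {0..1} (\<lambda>x. (1 + (ux x s)\<^sup>2) powr (3/2))) has_real_derivative d) (at t within {0..T})
           \<and> d \<le> C + C * (integral {0..1} (\<lambda>x. (1 + (ux x t)\<^sup>2) powr (3/2))) ^ 3))"
proof (rule exI[of _ "estimate_constant M"], rule conjI)
  show "estimate_constant M > 0" using estimate_constant_ge(2)[of M] by linarith
qed (intro allI impI ballI, elim conjE, rule solution_energy_estimates, assumption+)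

end
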